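(* For every instance of the single-processor carbon-aware scheduling problem that admits a valid schedule, there exists an optimal valid schedule in which, for every $u\in\{1,\dots,n\}$, the completion time $\sigma(v_u)+\omega(v_u)$ belongs to the set $$\mathcal{E}'=\Big\{x+\sum_{i=r}^{u}\omega(v_i)\;:\;x\in\mathcal{E},\,1\le r\le u\le n\Big\}\cup\Big\{x-\sum_{i=u+1}^{s}\omega(v_i)\;:\;x\in\mathcal{E},\,1\le u\le s\le n\Big\},$$ where $\mathcal{E}=\{b_1,e_1,\dots,e_J\}$; in particular $|\mathcal{E}'|=O(n^3J)$ (indeed $O(n^2 J)$ candidate values per task).
   Context: Single-processor carbon-aware scheduling problem. All quantities are nonnegative integers. One processor must execute tasks $v_1,\dots,v_n$ in this fixed order; task $v_i$ has duration $\omega(v_i)\ge 1$. The horizon $[0,T)$ is partitioned into $J$ consecutive intervals $I_j=[b_j,e_j)$, $1\le j\le J$, with $b_1=0$, $e_j=b_{j+1}$, $e_J=T$, each with a constant green power budget $\mathcal{G}_j\ge 0$ per time unit. The processor consumes idle power $P_{\mathrm{idle}}$ at every time unit, plus working power $P_{\mathrm{work}}$ at every time unit during which it executes a task. A (valid) schedule is an assignment of integer start times $\sigma(v_i)$ with $\sigma(v_1)\ge 0$, $\sigma(v_{i+1})\ge \sigma(v_i)+\omega(v_i)$ for $1\le i<n$, and $\sigma(v_n)+\omega(v_n)\le T$. The processor is active at integer time $t$ iff $\sigma(v_i)\le t<\sigma(v_i)+\omega(v_i)$ for some $i$; the power at $t$ is $\mathcal{P}(t)=P_{\mathrm{idle}}+P_{\mathrm{work}}$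 if active and $P_{\mathrm{idle}}$ otherwise. The total carbon cost is $\mathcal{CC}=\sum_{t=0}^{T-1}\max(\mathcal{P}(t)-\mathcal{G}_{j(t)},0)$, where $t\in I_{j(t)}$; a schedule is optimal if it is valid and has minimum carbon cost. *)

theory Defs
  imports Main
begin

(* Tasks are indexed 1..n; w i = duration of v_i; sigma i = start time of v_i.
   Interval boundaries: e 0 = b_1 = 0, interval I_j = [e (j-1), e j) for j = 1..J,
   e J = T.  G j = green power budget of interval I_j. *)

definition valid_schedule :: "nat \<Rightarrow> (nat \<Rightarrow> nat) \<Rightarrow> nat \<Rightarrow> (nat \<Rightarrow> nat) \<Rightarrow> bool" where
  "valid_schedule n w T sigma \<longleftrightarrow>
     (\<forall>i. 1 \<le> i \<and> i < n \<longrightarrow> sigma i + w i \<le> sigma (i + 1)) \<and>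
     (1 \<le> n \<longrightarrow> sigma n + w n \<le> T)"

definition active :: "nat \<Rightarrow> (nat \<Rightarrow> nat) \<Rightarrow> (nat \<Rightarrow> nat) \<Rightarrow> nat \<Rightarrow> bool" where
  "active n w sigma t \<longleftrightarrow> (\<exists>i\<in>{1..n}. sigma i \<le> t \<and> t < sigma i + w i)"

definition power :: "nat \<Rightarrow> nat \<Rightarrow> nat \<Rightarrow> (nat \<Rightarrow> nat) \<Rightarrow> (nat \<Rightarrow> nat) \<Rightarrow> nat \<Rightarrow> nat" where
  "power Pidle Pwork n w sigma t = (if active n w sigma t then Pidle + Pwork else Pidle)"

definition carbon_cost :: "nat \<Rightarrow> nat \<Rightarrow> nat \<Rightarrow> (nat \<Rightarrow> nat) \<Rightarrow> nat \<Rightarrow> (nat \<Rightarrow> nat) \<Rightarrow> (nat \<Rightarrow> nat)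
      \<Rightarrow> (nat \<Rightarrow> nat) \<Rightarrow> int" where
  "carbon_cost Pidle Pwork n w J e G sigma =
     (\<Sum>j\<in>{1..J}. \<Sum>t\<in>{e (j - 1)..<e j}.
        max (int (power Pidle Pwork n w sigma t) - int (G j)) 0)"

definition optimal_schedule :: "nat \<Rightarrow> nat \<Rightarrow> nat \<Rightarrow> (nat \<Rightarrow> nat) \<Rightarrow> nat \<Rightarrow> nat \<Rightarrow> (nat \<Rightarrow> nat)
      \<Rightarrow> (nat \<Rightarrow> nat) \<Rightarrow> (nat \<Rightarrow> nat) \<Rightarrow> bool" where
  "optimal_schedule Pidle Pwork n w T J e G sigma \<longleftrightarrow>
     valid_schedule n w T sigma \<and>
     (\<forall>sigma'. valid_schedule n w T sigma' \<longrightarrow>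
        carbon_cost Pidle Pwork n w J e G sigma \<le> carbon_cost Pidle Pwork n w J e G sigma')"

definition boundary_set :: "nat \<Rightarrow> (nat \<Rightarrow> nat) \<Rightarrow> nat set" where
  "boundary_set J e = e ` {0..J}"

(* E' (as integers, since x - sum may be negative) *)
definition candidate_set :: "nat \<Rightarrow> (nat \<Rightarrow> nat) \<Rightarrow> nat \<Rightarrow> (nat \<Rightarrow> nat) \<Rightarrow> int set" where
  "candidate_set n w J e =
     {int x + (\<Sum>i=r..u. int (w i)) | x r u. x \<in> boundary_set J e \<and> 1 \<le> r \<and> r \<le> u \<and> u \<le> n}
   \<union> {int x - (\<Sum>i=u+1..s. int (w i)) | x u s. x \<in> boundary_set J e \<and> 1 \<le> u \<and> u \<le> s \<and> s \<le> n}"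

end

theory Submission
  imports Defs
begin

(* Among the optimal schedules pick one whose start times have minimal sum. Every task u lies in
   a maximal block a..b of tasks run back to back, so its completion time equals the block start
   plus w_a + ... + w_u and also the block end minus w_(u+1) + ... + w_b; it therefore suffices
   that every maximal block starts or ends at an interval boundary. Otherwise the block can be
   shifted by one time unit in either direction. Such a shift only moves one busy time unit from
   one end of the block to the other, and since no boundary is crossed the left shift changes the
   cost by exactly the negative of the right shift. Optimality rules out a cheaper right shift, so
   the left shift is again optimal, with a smaller sum of start times. *)

lemma ex_has_least_nonneg_int:
  fixes f :: "'a \<Rightarrow> int"
  assumes "P x" and nonneg: "\<And>y. P y \<Longrightarrow> 0 \<le> f y"
  shows "\<exists>y. P y \<and> (\<forall>z. P z \<longrightarrow> f y \<le> f z)"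
proof -
  obtain y where "P y" and least: "\<forall>z. P z \<longrightarrow> nat (f y) \<le> nat (f z)"
    using ex_has_least_nat[of P x "\<lambda>y. nat (f y)"] \<open>P x\<close> by blast
  then show ?thesis using nonneg by (metis nat_le_eq_zle)
qed

lemma ex_maximal_run:
  fixes P :: "nat \<Rightarrow> bool"
  assumes "1 \<le> u" "u \<le> n"
  obtains a b where "1 \<le> a" "a \<le> u" "u \<le> b" "b \<le> n" "\<forall>i\<in>{a..<b}. P i"
    "1 < a \<Longrightarrow> \<not> P (a - 1)" "b < n \<Longrightarrow> \<not> P b"
proof -
  define L where "L = {i\<in>{1..<u}. \<not> P i}"
  define R where "R = {i\<in>{u..<n}. \<not> P i}"
  define a where "a = (if L = {} then 1 else Suc (Max L))"
  define b where "b = (if R = {} then n else Min R)"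
  have fin: "finite L" "finite R" unfolding L_def R_def by auto
  have a: "1 \<le> a \<and> a \<le> u \<and> (1 < a \<longrightarrow> \<not> P (a - 1))"
  proof (cases "L = {}")
    case False
    then have "Max L \<in> L" using fin by simp
    then have "Max L < u" "\<not> P (Max L)" unfolding L_def by auto
    then show ?thesis using False unfolding a_def by simp
  qed (use assms in \<open>simp add: a_def\<close>)
  moreover have b: "u \<le> b \<and> b \<le> n \<and> (b < n \<longrightarrow> \<not> P b)"
  proof (cases "R = {}")
    case False
    then have "Min R \<in> R" using fin by simp
    then have "u \<le> Min R" "Min R < n" "\<not> P (Min R)" unfolding R_def by auto
    then show ?thesis using False unfolding b_def by simp
  qed (use assms in \<open>simp add: b_def\<close>)
  moreover have "P i" if "a \<le> i" "i < b" for i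
  proof (cases "i < u")
    case True
    then have "i \<notin> L" using that Max_ge[OF fin(1), of i] unfolding a_def by (cases "L = {}") auto
    then show ?thesis using True that a unfolding L_def by auto
  next
    case False
    then have "i \<notin> R" using that Min_le[OF fin(2), of i] unfolding b_def by (cases "R = {}") auto
    then show ?thesis using False that b unfolding R_def by auto
  qed
  ultimately show thesis by (intro that[of a b]) auto
qed

lemma valid_schedule_start_mono:
  assumes "valid_schedule n w T s" "1 \<le> i" "i \<le> k" "k \<le> n"
  shows "s i \<le> s k"
  by (rule lift_Suc_mono_le_ivl[where N = "{1..<n}"])
     (use assms in \<open>auto simp: valid_schedule_def intro: le_trans[OF le_add1]\<close>)

lemma valid_schedule_completion_le_start:
  assumes "valid_schedule n w T s" "1 \<le> i" "i < k" "k \<le> n"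
  shows "s i + w i \<le> s k"
proof -
  have "s i + w i \<le> s (Suc i)" using assms unfolding valid_schedule_def by auto
  also have "\<dots> \<le> s k" using valid_schedule_start_mono assms by simp
  finally show ?thesis .
qed

lemma valid_schedule_completion_le_horizon:
  assumes "valid_schedule n w T s" "1 \<le> i" "i \<le> n"
  shows "s i + w i \<le> T"
proof (cases "i = n")
  case False
  then have "s i + w i \<le> s n" using valid_schedule_completion_le_start assms by simp
  then show ?thesis using assms unfolding valid_schedule_def by auto
qed (use assms in \<open>auto simp: valid_schedule_def\<close>)

definition busy_times :: "nat \<Rightarrow> (nat \<Rightarrow> nat) \<Rightarrow> (nat \<Rightarrow> nat) \<Rightarrow> nat set" where
  "busy_times n w s = {t. active n w s t}"

lemma busy_times_subset_horizon:
  assumes "valid_schedule n w T s"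
  shows "busy_times n w s \<subseteq> {..<T}"
  using valid_schedule_completion_le_horizon[OF assms]
  unfolding busy_times_def active_def by fastforce

definition tight_block :: "(nat \<Rightarrow> nat) \<Rightarrow> (nat \<Rightarrow> nat) \<Rightarrow> nat \<Rightarrow> nat \<Rightarrow> bool" where
  "tight_block w s a b \<longleftrightarrow> (\<forall>i\<in>{a..<b}. s i + w i = s (Suc i))"

lemma tight_block_completion:
  assumes "tight_block w s a b" "a \<le> k" "k \<le> b"
  shows "s k + w k = s a + (\<Sum>i=a..k. w i)"
  using assms(2,3)
proof (induction k rule: dec_induct)
  case (step k)
  then have "s (Suc k) = s k + w k" using assms(1) unfolding tight_block_def by simp
  then show ?case using step by simp
qed simp

lemma tight_block_covers:
  assumes "tight_block w s a b" "a \<le> b"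
  shows "(\<exists>i\<in>{a..b}. s i \<le> t \<and> t < s i + w i) \<longleftrightarrow> s a \<le> t \<and> t < s b + w b"
  using assms(2,1)
proof (induction b rule: dec_induct)
  case (step b)
  then have IH: "(\<exists>i\<in>{a..b}. s i \<le> t \<and> t < s i + w i) \<longleftrightarrow> s a \<le> t \<and> t < s b + w b"
    unfolding tight_block_def by simp
  have next_start: "s (Suc b) = s b + w b" using step unfolding tight_block_def by simp
  have "s a \<le> s b + w b"
    using tight_block_completion[OF step.prems] step by simp
  moreover have "{a..Suc b} = insert (Suc b) {a..b}" using step by auto
  ultimately show ?case using IH next_start by auto
qed simp

definition shift_block :: "nat \<Rightarrow> nat \<Rightarrow> (nat \<Rightarrow> nat) \<Rightarrow> nat \<Rightarrow> nat" where
  "shift_block a b s i = (if i \<in> {a..b} then s i + 1 else s i)"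

definition unshift_block :: "nat \<Rightarrow> nat \<Rightarrow> (nat \<Rightarrow> nat) \<Rightarrow> nat \<Rightarrow> nat" where
  "unshift_block a b s i = (if i \<in> {a..b} then s i - 1 else s i)"

lemma shift_unshift_block:
  assumes "\<forall>i\<in>{a..b}. 0 < s i"
  shows "shift_block a b (unshift_block a b s) = s"
  using assms unfolding shift_block_def unshift_block_def by fastforce

lemma valid_shift_block:
  assumes valid: "valid_schedule n w T s" and "b \<le> n"
    and gap: "b < n \<longrightarrow> s b + w b < s (Suc b)" and end_before: "s b + w b < T"
  shows "valid_schedule n w T (shift_block a b s)"
  unfolding valid_schedule_def
proof (intro conjI allI impI)
  fix i assume i: "1 \<le> i \<and> i < n"
  show "shift_block a b s i + w i \<le> shift_block a b s (i + 1)"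
  proof (cases "i = b")
    case True
    then show ?thesis using gap i unfolding shift_block_def by auto
  next
    case False
    then show ?thesis using valid i unfolding valid_schedule_def shift_block_def by auto
  qed
next
  assume "1 \<le> n"
  then show "shift_block a b s n + w n \<le> T"
    using valid end_before \<open>b \<le> n\<close> unfolding valid_schedule_def shift_block_def
    by (cases "n = b") auto
qed

lemma valid_unshift_block:
  assumes valid: "valid_schedule n w T s" and "1 \<le> a" "0 < s a"
    and gap: "1 < a \<longrightarrow> s (a - 1) + w (a - 1) < s a"
  shows "valid_schedule n w T (unshift_block a b s)"
  unfolding valid_schedule_def
proof (intro conjI allI impI)
  fix i assume i: "1 \<le> i \<and> i < n"
  have pos: "0 < s k" if "a \<le> k" "k \<le> n" for k
    using valid_schedule_start_mono[OF valid \<open>1 \<le> a\<close> that] \<open>0 < s a\<close> by simp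
  show "unshift_block a b s i + w i \<le> unshift_block a b s (i + 1)"
  proof (cases "Suc i = a")
    case True
    then show ?thesis using gap i unfolding unshift_block_def by auto
  next
    case False
    then show ?thesis
      using valid i pos[of i] pos[of "Suc i"] unfolding valid_schedule_def unshift_block_def by auto
  qed
next
  assume "1 \<le> n"
  then show "unshift_block a b s n + w n \<le> T"
    using valid unfolding valid_schedule_def unshift_block_def by auto
qed

lemma busy_times_shift_block:
  assumes valid: "valid_schedule n w T s"
    and block: "1 \<le> a" "a \<le> b" "b \<le> n" "tight_block w s a b"
    and nonempty: "s a < s b + w b"
    and gap: "b < n \<longrightarrow> s b + w b < s (Suc b)"
  shows "busy_times n w (shift_block a b s) = insert (s b + w b) (busy_times n w s - {s a})"
    and "s a \<in> busy_times n w s" and "s b + w b \<notin> busy_times n w s"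
proof -
  let ?s' = "shift_block a b s"
  define outside where "outside t \<longleftrightarrow> (\<exists>i\<in>{1..<a} \<union> {b<..n}. s i \<le> t \<and> t < s i + w i)" for t
  have outside_far: "t < s a \<or> s b + w b < t" if out: "outside t" for t
  proof -
    obtain i where i: "i \<in> {1..<a} \<union> {b<..n}" "s i \<le> t" "t < s i + w i"
      using out unfolding outside_def by blast
    show ?thesis
    proof (cases "i < a")
      case True
      then show ?thesis using valid_schedule_completion_le_start[OF valid, of i a] i block by simp
    next
      case False
      then have "s (Suc b) \<le> s i" using valid_schedule_start_mono[OF valid, of "Suc b" i] i by simp
      then show ?thesis using gap i False by simp
    qed
  qed
  have split: "{1..n} = ({1..<a} \<union> {b<..n}) \<union> {a..b}" using block by auto
  have "tight_block w ?s' a b" using block(4) unfolding tight_block_def shift_block_def by simp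
  then have "(\<exists>i\<in>{a..b}. ?s' i \<le> t \<and> t < ?s' i + w i) \<longleftrightarrow> s a + 1 \<le> t \<and> t < s b + w b + 1" for t
    using tight_block_covers[of w ?s' a b] block(2) unfolding shift_block_def by simp
  moreover have "?s' i = s i" if "i \<in> {1..<a} \<union> {b<..n}" for i
    using that unfolding shift_block_def by auto
  ultimately have busy':
      "t \<in> busy_times n w ?s' \<longleftrightarrow> outside t \<or> (s a + 1 \<le> t \<and> t < s b + w b + 1)" for t
    unfolding busy_times_def active_def outside_def split bex_Un by auto
  have busy: "t \<in> busy_times n w s \<longleftrightarrow> outside t \<or> (s a \<le> t \<and> t < s b + w b)" for t
    unfolding busy_times_def active_def outside_def split bex_Un
    using tight_block_covers[OF block(4,2)] by auto
  show "busy_times n w ?s' = insert (s b + w b) (busy_times n w s - {s a})"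
    by (rule set_eqI) (use busy busy' outside_far nonempty in fastforce)
  show "s a \<in> busy_times n w s" "s b + w b \<notin> busy_times n w s"
    using busy outside_far nonempty by fastforce+
qed

locale partitioned_horizon =
  fixes J T :: nat and e :: "nat \<Rightarrow> nat"
  assumes e_start: "e 0 = 0"
    and e_mono: "\<forall>j\<in>{1..J}. e (j - 1) \<le> e j"
    and e_end: "e J = T"
begin

lemma e_le:
  assumes "k \<le> m" "m \<le> J"
  shows "e k \<le> e m"
proof (rule lift_Suc_mono_le_ivl[where f = e and N = "{..<J}"])
  show "e i \<le> e (Suc i)" if "i \<in> {..<J}" for i
    using bspec[OF e_mono, of "Suc i"] that by simp
qed (use assms in auto)

definition interval_index :: "nat \<Rightarrow> nat" where
  "interval_index t = (LEAST j. t < e j)"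

lemma interval_index_eq:
  assumes "j \<in> {1..J}" "e (j - 1) \<le> t" "t < e j"
  shows "interval_index t = j"
  unfolding interval_index_def
proof (rule Least_equality)
  show "t < e j" by fact
  show "j \<le> k" if "t < e k" for k
  proof (rule ccontr)
    assume "\<not> j \<le> k"
    then have "e k \<le> e (j - 1)" using e_le assms(1) by simp
    then show False using assms(2) \<open>t < e k\<close> by simp
  qed
qed

lemma ex_interval:
  assumes "t < T"
  obtains j where "j \<in> {1..J}" "e (j - 1) \<le> t" "t < e j"
proof
  define j where "j = (LEAST j. t < e j)"
  have "t < e J" using assms e_end by simp
  then have "j \<le> J" "t < e j" unfolding j_def by (auto intro: Least_le LeastI)
  moreover have "j \<noteq> 0" using \<open>t < e j\<close> e_start by (cases j) auto
  moreover have "\<not> t < e (j - 1)"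
    unfolding j_def by (rule not_less_Least) (use \<open>j \<noteq> 0\<close> in \<open>simp add: j_def\<close>)
  ultimately show "j \<in> {1..J}" "e (j - 1) \<le> t" "t < e j" by auto
qed

lemma interval_index_Suc:
  assumes "Suc t < T" "Suc t \<notin> boundary_set J e"
  shows "interval_index (Suc t) = interval_index t"
proof -
  obtain j where j: "j \<in> {1..J}" "e (j - 1) \<le> Suc t" "Suc t < e j"
    using ex_interval assms(1) .
  have "e (j - 1) \<in> boundary_set J e" using j(1) unfolding boundary_set_def by (intro imageI) auto
  then have "e (j - 1) \<noteq> Suc t" using assms(2) by auto
  then show ?thesis using interval_index_eq j by simp
qed

lemma sum_over_intervals:
  "(\<Sum>j\<in>{1..J}. \<Sum>t\<in>{e (j - 1)..<e j}. f j t) = (\<Sum>t<T. f (interval_index t) t)"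
proof -
  let ?I = "\<lambda>j. {e (j - 1)..<e j}"
  have "(\<Sum>j\<in>{1..J}. \<Sum>t\<in>?I j. f j t) = (\<Sum>j\<in>{1..J}. \<Sum>t\<in>?I j. f (interval_index t) t)"
    using interval_index_eq by (intro sum.cong) auto
  also have "\<dots> = (\<Sum>t\<in>(\<Union>j\<in>{1..J}. ?I j). f (interval_index t) t)"
  proof (rule sum.UNION_disjoint[symmetric])
    show "\<forall>i\<in>{1..J}. \<forall>j\<in>{1..J}. i \<noteq> j \<longrightarrow> ?I i \<inter> ?I j = {}"
    proof (intro ballI impI)
      fix i j assume "i \<in> {1..J}" "j \<in> {1..J}" "i \<noteq> j"
      show "?I i \<inter> ?I j = {}"
      proof (rule equals0I)
        fix t assume "t \<in> ?I i \<inter> ?I j"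
        then have "interval_index t = i" "interval_index t = j"
          using interval_index_eq \<open>i \<in> {1..J}\<close> \<open>j \<in> {1..J}\<close> by auto
        then show False using \<open>i \<noteq> j\<close> by simp
      qed
    qed
  qed auto
  also have "(\<Union>j\<in>{1..J}. ?I j) = {..<T}"
  proof
    show "(\<Union>j\<in>{1..J}. ?I j) \<subseteq> {..<T}" using e_le e_end by fastforce
    show "{..<T} \<subseteq> (\<Union>j\<in>{1..J}. ?I j)"
    proof
      fix t assume "t \<in> {..<T}"
      then obtain j where "j \<in> {1..J}" "e (j - 1) \<le> t" "t < e j" using ex_interval by blast
      then show "t \<in> (\<Union>j\<in>{1..J}. ?I j)" by auto
    qed
  qed
  finally show ?thesis .
qed

end

locale carbon_instance = partitioned_horizon +
  fixes n Pidle Pwork :: nat and w G :: "nat \<Rightarrow> nat"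
begin

abbreviation cost :: "(nat \<Rightarrow> nat) \<Rightarrow> int" where
  "cost \<equiv> carbon_cost Pidle Pwork n w J e G"

definition time_cost :: "nat \<Rightarrow> bool \<Rightarrow> int" where
  "time_cost t busy =
     max (int (if busy then Pidle + Pwork else Pidle) - int (G (interval_index t))) 0"

definition marginal_cost :: "nat \<Rightarrow> int" where
  "marginal_cost t = time_cost t True - time_cost t False"

lemma carbon_cost_eq:
  assumes "valid_schedule n w T s"
  shows "cost s = (\<Sum>t<T. time_cost t False) + (\<Sum>t\<in>busy_times n w s. marginal_cost t)"
proof -
  have "cost s = (\<Sum>t<T. time_cost t (active n w s t))"
    unfolding carbon_cost_def time_cost_def power_def
    by (rule sum_over_intervals[where
          f = "\<lambda>j t. max (int (if active n w s t then Pidle + Pwork else Pidle) - int (G j)) 0"])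
  also have "\<dots> = (\<Sum>t<T. time_cost t False + (if t \<in> busy_times n w s then marginal_cost t else 0))"
    by (intro sum.cong) (auto simp: marginal_cost_def busy_times_def)
  also have "\<dots> = (\<Sum>t<T. time_cost t False) + (\<Sum>t\<in>{..<T} \<inter> busy_times n w s. marginal_cost t)"
    by (simp add: sum.distrib sum.inter_restrict)
  also have "{..<T} \<inter> busy_times n w s = busy_times n w s"
    using busy_times_subset_horizon[OF assms] by blast
  finally show ?thesis .
qed

lemma marginal_cost_pred:
  assumes "0 < t" "t < T" "t \<notin> boundary_set J e"
  shows "marginal_cost (t - 1) = marginal_cost t"
  using interval_index_Suc[of "t - 1"] assms by (simp add: marginal_cost_def time_cost_def)

lemma carbon_cost_shift_block:
  assumes valid: "valid_schedule n w T s"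
    and block: "1 \<le> a" "a \<le> b" "b \<le> n" "tight_block w s a b"
    and nonempty: "s a < s b + w b"
    and gap: "b < n \<longrightarrow> s b + w b < s (Suc b)"
    and end_before: "s b + w b < T"
  shows "valid_schedule n w T (shift_block a b s)"
    and "cost (shift_block a b s) = cost s + marginal_cost (s b + w b) - marginal_cost (s a)"
proof -
  show valid': "valid_schedule n w T (shift_block a b s)"
    using valid_shift_block[OF valid block(3) gap end_before] .
  have fin: "finite (busy_times n w s)"
    using busy_times_subset_horizon[OF valid] finite_subset by blast
  note busy = busy_times_shift_block[OF valid block nonempty gap]
  have "(\<Sum>t\<in>busy_times n w (shift_block a b s). marginal_cost t)
      = (\<Sum>t\<in>busy_times n w s. marginal_cost t) + marginal_cost (s b + w b) - marginal_cost (s a)"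
    unfolding busy(1) using fin busy(2,3) by (simp add: sum_diff1)
  then show "cost (shift_block a b s) = cost s + marginal_cost (s b + w b) - marginal_cost (s a)"
    unfolding carbon_cost_eq[OF valid] carbon_cost_eq[OF valid'] by simp
qed

lemma carbon_cost_unshift_block:
  assumes valid: "valid_schedule n w T s"
    and block: "1 \<le> a" "a \<le> b" "b \<le> n" "tight_block w s a b"
    and start_pos: "0 < s a" and nonempty: "s a < s b + w b"
    and gap: "1 < a \<longrightarrow> s (a - 1) + w (a - 1) < s a"
  shows "valid_schedule n w T (unshift_block a b s)"
    and "cost s =
           cost (unshift_block a b s) + marginal_cost (s b + w b - 1) - marginal_cost (s a - 1)"
proof -
  let ?s' = "unshift_block a b s"
  show valid': "valid_schedule n w T ?s'"
    using valid_unshift_block[OF valid block(1) start_pos gap] .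
  have pos: "0 < s i" if "i \<in> {a..b}" for i
    using valid_schedule_start_mono[OF valid, of a i] that block start_pos by simp
  have shift: "shift_block a b ?s' = s"
    using shift_unshift_block pos by blast
  have "?s' a = s a - 1" "?s' b + w b = s b + w b - 1"
    using block pos[of b] unfolding unshift_block_def by auto
  moreover have "tight_block w ?s' a b"
    unfolding tight_block_def
  proof
    fix i assume i: "i \<in> {a..<b}"
    then have "s i + w i = s (Suc i)" "0 < s i" using block(4) pos unfolding tight_block_def by auto
    then show "?s' i + w i = ?s' (Suc i)" using i unfolding unshift_block_def by auto
  qed
  moreover have "b < n \<longrightarrow> ?s' b + w b < ?s' (Suc b)"
    using valid_schedule_completion_le_start[OF valid, of b "Suc b"] block pos[of b]
    unfolding unshift_block_def by auto
  moreover have "s b + w b \<le> T"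
    using valid_schedule_completion_le_horizon[OF valid] block by simp
  ultimately show "cost s = cost ?s' + marginal_cost (s b + w b - 1) - marginal_cost (s a - 1)"
    using carbon_cost_shift_block(2)[OF valid' block(1-3)] nonempty start_pos shift by simp
qed

lemma maximal_block_touches_boundary:
  assumes opt: "optimal_schedule Pidle Pwork n w T J e G s"
    and least: "\<forall>s'. optimal_schedule Pidle Pwork n w T J e G s' \<longrightarrow>
                  (\<Sum>i=1..n. s i) \<le> (\<Sum>i=1..n. s' i)"
    and block: "1 \<le> a" "a \<le> b" "b \<le> n" "tight_block w s a b"
    and w_a: "1 \<le> w a"
    and left_maximal: "1 < a \<longrightarrow> s (a - 1) + w (a - 1) \<noteq> s a"
    and right_maximal: "b < n \<longrightarrow> s b + w b \<noteq> s (Suc b)"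
  shows "s a \<in> boundary_set J e \<or> s b + w b \<in> boundary_set J e"
proof (rule ccontr)
  assume "\<not> ?thesis"
  then have start_inner: "s a \<notin> boundary_set J e" and end_inner: "s b + w b \<notin> boundary_set J e"
    by auto
  have valid: "valid_schedule n w T s" using opt unfolding optimal_schedule_def by simp
  have "0 \<in> boundary_set J e" "T \<in> boundary_set J e"
    unfolding boundary_set_def using e_start e_end by force+
  then have "s a \<noteq> 0" "s b + w b \<noteq> T" using start_inner end_inner by metis+
  then have start_pos: "0 < s a" by simp
  have "s b + w b \<le> T"
    using valid_schedule_completion_le_horizon[OF valid] block by simp
  then have end_before: "s b + w b < T" using \<open>s b + w b \<noteq> T\<close> by simp
  have "s b + w b = s a + w a + (\<Sum>i=Suc a..b. w i)"
    using tight_block_completion[OF block(4,2)] block(2) by (simp add: sum.atLeast_Suc_atMost)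
  then have nonempty: "s a < s b + w b" using w_a by simp
  have gap_left: "1 < a \<longrightarrow> s (a - 1) + w (a - 1) < s a"
  proof
    assume "1 < a"
    then have "s (a - 1) + w (a - 1) \<le> s a"
      using valid_schedule_completion_le_start[OF valid, of "a - 1" a] block(2,3) by simp
    then show "s (a - 1) + w (a - 1) < s a" using left_maximal \<open>1 < a\<close> by simp
  qed
  have gap_right: "b < n \<longrightarrow> s b + w b < s (Suc b)"
    using valid_schedule_completion_le_start[OF valid, of b "Suc b"] right_maximal block(1,2)
    by auto
  note right = carbon_cost_shift_block[OF valid block nonempty gap_right end_before]
  note left = carbon_cost_unshift_block[OF valid block start_pos nonempty gap_left]
  have "cost s \<le> cost (shift_block a b s)"
    using opt right(1) unfolding optimal_schedule_def by blast
  then have "marginal_cost (s a) \<le> marginal_cost (s b + w b)" using right(2) by simp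
  moreover have "marginal_cost (s a - 1) = marginal_cost (s a)"
    using start_pos nonempty end_before start_inner by (intro marginal_cost_pred) auto
  moreover have "marginal_cost (s b + w b - 1) = marginal_cost (s b + w b)"
    using nonempty end_before end_inner by (intro marginal_cost_pred) auto
  ultimately have "cost (unshift_block a b s) \<le> cost s" using left(2) by simp
  then have "optimal_schedule Pidle Pwork n w T J e G (unshift_block a b s)"
    using opt left(1) unfolding optimal_schedule_def by fastforce
  moreover have "(\<Sum>i=1..n. unshift_block a b s i) < (\<Sum>i=1..n. s i)"
  proof (rule sum_strict_mono_ex1)
    show "\<forall>i\<in>{1..n}. unshift_block a b s i \<le> s i" unfolding unshift_block_def by simp
    show "\<exists>i\<in>{1..n}. unshift_block a b s i < s i"
      using block start_pos unfolding unshift_block_def by (intro bexI[of _ a]) auto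
  qed simp
  ultimately show False using least by fastforce
qed

lemma completion_in_candidate_set:
  assumes w_pos: "\<forall>i\<in>{1..n}. 1 \<le> w i"
    and opt: "optimal_schedule Pidle Pwork n w T J e G s"
    and least: "\<forall>s'. optimal_schedule Pidle Pwork n w T J e G s' \<longrightarrow>
                  (\<Sum>i=1..n. s i) \<le> (\<Sum>i=1..n. s' i)"
    and u: "u \<in> {1..n}"
  shows "int (s u + w u) \<in> candidate_set n w J e"
proof -
  obtain a b where ab: "1 \<le> a" "a \<le> u" "u \<le> b" "b \<le> n"
    and tight: "\<forall>i\<in>{a..<b}. s i + w i = s (Suc i)"
    and left: "1 < a \<Longrightarrow> s (a - 1) + w (a - 1) \<noteq> s (Suc (a - 1))"
    and right: "b < n \<Longrightarrow> s b + w b \<noteq> s (Suc b)"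
    using ex_maximal_run[of u n "\<lambda>i. s i + w i = s (Suc i)"] u by auto
  have block: "tight_block w s a b" using tight unfolding tight_block_def .
  have "s a \<in> boundary_set J e \<or> s b + w b \<in> boundary_set J e"
    using ab w_pos left right
    by (intro maximal_block_touches_boundary[OF opt least _ _ _ block]) auto
  moreover have completion: "s u + w u = s a + (\<Sum>i=a..u. w i)"
    using tight_block_completion[OF block] ab by simp
  moreover have "s b + w b = s u + w u + (\<Sum>i=u+1..b. w i)"
    using tight_block_completion[OF block, of b] ab completion sum.ub_add_nat[of a u w "b - u"]
    by simp
  ultimately show ?thesis
  proof (elim disjE)
    assume "s a \<in> boundary_set J e"
    then show ?thesis unfolding candidate_set_def completion using ab
      by (intro UnI1 CollectI exI[of _ "s a"] exI[of _ a] exI[of _ u]) (auto simp: of_nat_sum)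
  next
    assume "s b + w b \<in> boundary_set J e"
    moreover have "int (s u + w u) = int (s b + w b) - (\<Sum>i=u+1..b. int (w i))"
      using \<open>s b + w b = _\<close> by (simp add: of_nat_sum)
    ultimately show ?thesis unfolding candidate_set_def using ab
      by (intro UnI2 CollectI exI[of _ "s b + w b"] exI[of _ u] exI[of _ b]) auto
  qed
qed

end

lemma ex_optimal_schedule:
  assumes "valid_schedule n w T s"
  shows "\<exists>s. optimal_schedule Pidle Pwork n w T J e G s"
proof -
  have "0 \<le> carbon_cost Pidle Pwork n w J e G s'" for s'
    unfolding carbon_cost_def by (intro sum_nonneg) auto
  then show ?thesis unfolding optimal_schedule_def
    using ex_has_least_nonneg_int[of "valid_schedule n w T" s] assms by blast
qed

lemma finite_card_candidate_set:
  "finite (candidate_set n w J e) \<and> card (candidate_set n w J e) \<le> (J + 1) * n * (n + 1)"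
proof -
  (* (x, p, q) with p \<le> q encodes x + w_p + ... + w_q, and with p = s + 1 > q = u it encodes
     x - w_(u+1) - ... - w_s *)
  define F where "F = (\<lambda>(x::nat, p::nat, q::nat).
      if p \<le> q then int x + (\<Sum>i=p..q. int (w i)) else int x - (\<Sum>i=q+1..p-1. int (w i)))"
  define D where "D = boundary_set J e \<times> {1..n+1} \<times> {1..n}"
  have sub: "candidate_set n w J e \<subseteq> F ` D"
  proof
    fix y assume "y \<in> candidate_set n w J e"
    then consider (plus) x r u where "y = int x + (\<Sum>i=r..u. int (w i))"
        "x \<in> boundary_set J e" "1 \<le> r" "r \<le> u" "u \<le> n"
      | (minus) x u s where "y = int x - (\<Sum>i=u+1..s. int (w i))"
        "x \<in> boundary_set J e" "1 \<le> u" "u \<le> s" "s \<le> n"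
      unfolding candidate_set_def by blast
    then show "y \<in> F ` D"
    proof cases
      case plus
      then show ?thesis unfolding D_def by (intro image_eqI[of _ _ "(x, r, u)"]) (auto simp: F_def)
    next
      case minus
      then show ?thesis
        unfolding D_def by (intro image_eqI[of _ _ "(x, Suc s, u)"]) (auto simp: F_def)
    qed
  qed
  have fin: "finite (boundary_set J e)" and card: "card (boundary_set J e) \<le> J + 1"
    unfolding boundary_set_def using card_image_le[of "{0..J}" e] by auto
  have "card D = card (boundary_set J e) * (n * (n + 1))"
    unfolding D_def card_cartesian_product by simp
  also have "\<dots> \<le> (J + 1) * n * (n + 1)"
    using mult_le_mono1[OF card, of "n * (n + 1)"] by (simp only: mult.assoc)
  finally have "finite D" "card D \<le> (J + 1) * n * (n + 1)"
    using fin unfolding D_def by auto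
  then show ?thesis
    using sub card_image_le[of D F] finite_subset card_mono by (metis finite_imageI le_trans)
qed

theorem mainTheorem3:
  fixes n J T Pidle Pwork :: nat and w e G :: "nat \<Rightarrow> nat"
  assumes J_pos: "1 \<le> J"
    and e_start: "e 0 = 0"
    and e_mono: "\<forall>j\<in>{1..J}. e (j - 1) \<le> e j"
    and e_end: "e J = T"
    and w_pos: "\<forall>i\<in>{1..n}. 1 \<le> w i"
    and feasible: "\<exists>sigma. valid_schedule n w T sigma"
  shows "(\<exists>sigma. optimal_schedule Pidle Pwork n w T J e G sigma \<and>
            (\<forall>u\<in>{1..n}. int (sigma u + w u) \<in> candidate_set n w J e))
         \<and> finite (candidate_set n w J e)
         \<and> card (candidate_set n w J e) \<le> (J + 1) * n * (n + 1)"
proof -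
  interpret carbon_instance J T e n Pidle Pwork w G
    using e_start e_mono e_end by unfold_locales
  obtain s0 where "optimal_schedule Pidle Pwork n w T J e G s0"
    using feasible ex_optimal_schedule by blast
  then obtain sigma where opt: "optimal_schedule Pidle Pwork n w T J e G sigma"
    and least: "\<forall>s. optimal_schedule Pidle Pwork n w T J e G s \<longrightarrow>
                  (\<Sum>i=1..n. sigma i) \<le> (\<Sum>i=1..n. s i)"
    using ex_has_least_nat[of "optimal_schedule Pidle Pwork n w T J e G" s0 "\<lambda>s. \<Sum>i=1..n. s i"]
    by blast
  have "\<forall>u\<in>{1..n}. int (sigma u + w u) \<in> candidate_set n w J e"
    using completion_in_candidate_set[OF w_pos opt least] by blast
  then show ?thesis using opt finite_card_candidate_set by blast
qed

end
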